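(* Let $Y$ be an $\mathrm{OA}(N,k,2,t)$ with symbols from $\{-1,1\}$ and strength $t\ge 1$, and let $X$ be an $N\times k$ array with entries in $\{-1,1\}$. Then $X$ is OD-equivalent to $Y$ if and only if there exists $g\in G(k)^{\rm OD}$ such that the multiset of rows of $X$ equals the multiset of rows of $g(Y)$. Moreover, if $X$ is OD-equivalent to $Y$, then $X$ is an $\mathrm{OA}(N,k,2,2\lfloor t/2\rfloor)$.
   Context: An $\mathrm{OA}(N,k,s,t)$ with $t\in\{0,\dots,k\}$ is an $N\times k$ array over an $s$-element symbol set such that in every $N\times t$ subarray each of the $s^t$ possible $t$-tuples appears exactly $N/s^t$ times as a row. Two $N\times k$ arrays $Y_1,Y_2$ over $\{-1,1\}$ are Hadamard equivalent if $Y_2$ is obtained from $Y_1$ by a sequence of signed permutations (permutations possibly followed by sign changes) of rows or columns, i.e. $Y_2=P_1D_1Y_1D_2P_2$ for permutation matrices $P_1,P_2$ and diagonal $\pm1$ matrices $D_1,D_2$. $X_1,X_2$ are OD-equivalent if $[\mathbf{1},X_1]$ and $[\mathbf{1},X_2]$ are Hadamard equivalent. $G(k)^{\rm OD}$ is the group of permutations of $\{-1,1\}^k$ generated by coordinate permutations, sign changes of single coordinates, and $R_i(z_1,\dots,z_k)=(z_1z_i,\dots,z_{i-1}z_i,z_i,z_{i+1}z_i,\dots,z_kz_i)$ for $i=1,\dots,k$; it acts on arrays row by row. *)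

theory Defs
  imports Complex_Main "HOL-Combinatorics.Permutations" "HOL-Library.Multiset"
begin

text \<open>An N x k array over {-1,1} is a function  A :: nat => nat => int ;
  only the entries A i j with i < N and j < k are relevant.\<close>

definition pm_array :: "nat \<Rightarrow> nat \<Rightarrow> (nat \<Rightarrow> nat \<Rightarrow> int) \<Rightarrow> bool" where
  "pm_array N k A \<longleftrightarrow> (\<forall>i<N. \<forall>j<k. A i j \<in> {-1, 1})"

definition is_OA :: "nat \<Rightarrow> nat \<Rightarrow> nat \<Rightarrow> (nat \<Rightarrow> nat \<Rightarrow> int) \<Rightarrow> bool" where
  "is_OA N k t A \<longleftrightarrow> pm_array N k A \<and> t \<le> k \<and>
     (\<forall>T. T \<subseteq> {..<k} \<longrightarrow> card T = t \<longrightarrow>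
        (\<forall>v::nat \<Rightarrow> int. v ` T \<subseteq> {-1, 1} \<longrightarrow>
           (of_nat (card {i. i < N \<and> (\<forall>j\<in>T. A i j = v j)}) :: rat) = of_nat N / 2 ^ t))"

definition hadamard_equiv :: "nat \<Rightarrow> nat \<Rightarrow> (nat \<Rightarrow> nat \<Rightarrow> int) \<Rightarrow> (nat \<Rightarrow> nat \<Rightarrow> int) \<Rightarrow> bool" where
  "hadamard_equiv N m Y1 Y2 \<longleftrightarrow>
     (\<exists>\<sigma> \<tau> (d1::nat \<Rightarrow> int) (d2::nat \<Rightarrow> int).
        \<sigma> permutes {..<N} \<and> \<tau> permutes {..<m} \<and>
        (\<forall>i<N. d1 i \<in> {-1, 1}) \<and> (\<forall>j<m. d2 j \<in> {-1, 1}) \<and>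
        (\<forall>i<N. \<forall>j<m. Y2 i j = d1 i * d2 j * Y1 (\<sigma> i) (\<tau> j)))"

definition one_col :: "(nat \<Rightarrow> nat \<Rightarrow> int) \<Rightarrow> nat \<Rightarrow> nat \<Rightarrow> int" where
  "one_col X i j = (if j = 0 then 1 else X i (j - 1))"

definition OD_equiv :: "nat \<Rightarrow> nat \<Rightarrow> (nat \<Rightarrow> nat \<Rightarrow> int) \<Rightarrow> (nat \<Rightarrow> nat \<Rightarrow> int) \<Rightarrow> bool" where
  "OD_equiv N k X1 X2 \<longleftrightarrow> hadamard_equiv N (Suc k) (one_col X1) (one_col X2)"

text \<open>Points of {-1,1}^k are represented as int lists of length k.\<close>
definition coord_perm :: "nat \<Rightarrow> (nat \<Rightarrow> nat) \<Rightarrow> int list \<Rightarrow> int list" where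
  "coord_perm k \<pi> z = map (\<lambda>j. z ! \<pi> j) [0..<k]"

definition sign_change :: "nat \<Rightarrow> int list \<Rightarrow> int list" where
  "sign_change i z = z[i := - (z ! i)]"

definition R_map :: "nat \<Rightarrow> nat \<Rightarrow> int list \<Rightarrow> int list" where
  "R_map k i z = map (\<lambda>j. if j = i then z ! i else z ! j * z ! i) [0..<k]"

inductive OD_gen :: "nat \<Rightarrow> (int list \<Rightarrow> int list) \<Rightarrow> bool" for k where
  "\<pi> permutes {..<k} \<Longrightarrow> OD_gen k (coord_perm k \<pi>)"
| "i < k \<Longrightarrow> OD_gen k (sign_change i)"
| "i < k \<Longrightarrow> OD_gen k (R_map k i)"

text \<open>All generators are bijections of
  the finite set {-1,1}^k whose inverses are again generators (or products of them), so the
  generated group equals the closure of the identity under composition with generators.\<close>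
inductive G_OD :: "nat \<Rightarrow> (int list \<Rightarrow> int list) \<Rightarrow> bool" for k where
  G_OD_id: "G_OD k id"
| G_OD_step: "OD_gen k h \<Longrightarrow> G_OD k g \<Longrightarrow> G_OD k (h \<circ> g)"

definition arr_row :: "nat \<Rightarrow> (nat \<Rightarrow> nat \<Rightarrow> int) \<Rightarrow> nat \<Rightarrow> int list" where
  "arr_row k A i = map (A i) [0..<k]"

definition rows_mset :: "nat \<Rightarrow> nat \<Rightarrow> (nat \<Rightarrow> nat \<Rightarrow> int) \<Rightarrow> int list multiset" where
  "rows_mset N k A = mset (map (arr_row k A) [0..<N])"

definition rows_mset_act :: "nat \<Rightarrow> nat \<Rightarrow> (int list \<Rightarrow> int list) \<Rightarrow> (nat \<Rightarrow> nat \<Rightarrow> int) \<Rightarrow> int list multiset" where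
  "rows_mset_act N k g A = mset (map (\<lambda>i. g (arr_row k A i)) [0..<N])"

end

(*
  An OD-equivalence moves some column c of [1, Y] to the front of [1, X].  Since that column of
  [1, X] consists of ones, each row of X is the matching row of Y with every other column of
  [1, Y] multiplied by its entry in column c, then permuted and sign-changed: this is R_c
  (unless c is the column of ones) followed by a coordinate permutation and sign changes.
  Conversely every generator acts on [1, z] as a signed column permutation followed by a row
  sign (R_i swaps the columns 0 and i and multiplies the row by z_i), hence so does G(k)^OD.

  Coordinate permutations and sign changes map patterns to patterns, and so does R_i on column
  sets containing i.  On a set T of n columns not containing i, the rows of R_i(Y) showing v on T
  are the rows of Y showing w or -w on T + {i}, where w extends v by 1.  Flipping one entry of a
  pattern on n + 1 columns complements its count with respect to N / 2^n, so for even n the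
  counts of w and -w add up to N / 2^n although only strength n is available.  Hence G(k)^OD
  preserves even strength, and strength t gives strength 2 floor(t/2).
*)
theory Submission
  imports Defs
begin

lemma pm_mult: "(a::int) \<in> {-1, 1} \<Longrightarrow> b \<in> {-1, 1} \<Longrightarrow> a * b \<in> {-1, 1}"
  by auto

lemma pm_mult_self: "(a::int) \<in> {-1, 1} \<Longrightarrow> a * a = 1"
  by auto

lemma pm_normalize:
  fixes d e a e' b :: int
  assumes "d \<in> {-1, 1}" "e \<in> {-1, 1}" "a \<in> {-1, 1}" and "d * e * a = 1"
  shows "d * e' * b = e * e' * (a * b)"
  using assms by auto

definition pm_vec :: "nat \<Rightarrow> int list \<Rightarrow> bool" where
  "pm_vec k z \<longleftrightarrow> length z = k \<and> set z \<subseteq> {-1, 1}"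

lemma pm_vec_iff_nth: "pm_vec k z \<longleftrightarrow> length z = k \<and> (\<forall>j<k. z ! j \<in> {-1, 1})"
  unfolding pm_vec_def by (auto simp: set_conv_nth)

lemma pm_vec_nth: "pm_vec k z \<Longrightarrow> j < k \<Longrightarrow> z ! j \<in> {-1, 1}"
  by (simp add: pm_vec_iff_nth)

lemma pm_array_iff_pm_vec_rows: "pm_array N k A \<longleftrightarrow> (\<forall>i<N. pm_vec k (arr_row k A i))"
  by (simp add: pm_array_def pm_vec_iff_nth arr_row_def)

lemma length_coord_perm [simp]: "length (coord_perm k \<pi> z) = k"
  by (simp add: coord_perm_def)

lemma nth_coord_perm: "j < k \<Longrightarrow> coord_perm k \<pi> z ! j = z ! \<pi> j"
  by (simp add: coord_perm_def)

lemma length_sign_change [simp]: "length (sign_change i z) = length z"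
  by (simp add: sign_change_def)

lemma nth_sign_change:
  "i < length z \<Longrightarrow> sign_change i z ! j = (if j = i then - z ! j else z ! j)"
  by (simp add: sign_change_def nth_list_update)

lemma length_R_map [simp]: "length (R_map k i z) = k"
  by (simp add: R_map_def)

lemma nth_R_map: "j < k \<Longrightarrow> R_map k i z ! j = (if j = i then z ! i else z ! j * z ! i)"
  by (simp add: R_map_def)

lemma pm_vec_OD_gen: assumes "OD_gen k h" "pm_vec k z" shows "pm_vec k (h z)"
  using assms(1)
proof cases
  case (1 \<pi>)
  then show ?thesis
    using assms(2) permutes_in_image[OF 1(2)] by (auto simp: pm_vec_iff_nth nth_coord_perm)
next
  case (2 i)
  then show ?thesis using assms(2) by (auto simp: pm_vec_iff_nth nth_sign_change)
next
  case (3 i)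
  have "R_map k i z ! j \<in> {-1, 1}" if "j < k" for j
    using pm_mult[OF pm_vec_nth[OF assms(2) that] pm_vec_nth[OF assms(2) 3(2)]]
      pm_vec_nth[OF assms(2) 3(2)] by (simp add: nth_R_map that)
  then show ?thesis using 3(1) by (simp add: pm_vec_iff_nth)
qed

lemma pm_vec_G_OD: "G_OD k g \<Longrightarrow> pm_vec k z \<Longrightarrow> pm_vec k (g z)"
  by (induction rule: G_OD.induct) (auto intro: pm_vec_OD_gen)

lemma G_OD_comp: "G_OD k g \<Longrightarrow> G_OD k g' \<Longrightarrow> G_OD k (g \<circ> g')"
proof (induction rule: G_OD.induct)
  case G_OD_id
  then show ?case by simp
next
  case (G_OD_step h g)
  show ?case
    using G_OD.G_OD_step[OF G_OD_step.hyps(1) G_OD_step.IH[OF G_OD_step.prems]]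
    by (simp only: comp_assoc)
qed

lemma G_OD_if_OD_gen: "OD_gen k h \<Longrightarrow> G_OD k h"
  using G_OD_step[OF _ G_OD_id] by simp

section \<open>Pattern counts\<close>

definition pattern_count :: "int list multiset \<Rightarrow> nat set \<Rightarrow> (nat \<Rightarrow> int) \<Rightarrow> nat" where
  "pattern_count M T v = size {#z \<in># M. \<forall>j\<in>T. z ! j = v j#}"

definition oa_mset :: "nat \<Rightarrow> nat \<Rightarrow> int list multiset \<Rightarrow> bool" where
  "oa_mset k t M \<longleftrightarrow> (\<forall>z\<in>#M. pm_vec k z) \<and> t \<le> k \<and>
     (\<forall>T \<subseteq> {..<k}. card T = t \<longrightarrow>
        (\<forall>v. v ` T \<subseteq> {-1, 1} \<longrightarrow> 2 ^ t * pattern_count M T v = size M))"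

lemma oa_mset_pattern_count:
  "oa_mset k t M \<Longrightarrow> T \<subseteq> {..<k} \<Longrightarrow> card T = t \<Longrightarrow> v ` T \<subseteq> {-1, 1} \<Longrightarrow>
    2 ^ t * pattern_count M T v = size M"
  by (simp add: oa_mset_def)

lemma pattern_count_rows_mset:
  assumes "T \<subseteq> {..<k}"
  shows "pattern_count (rows_mset N k A) T v = card {i. i < N \<and> (\<forall>j\<in>T. A i j = v j)}"
proof -
  have "pattern_count (rows_mset N k A) T v
      = length (filter (\<lambda>z. \<forall>j\<in>T. z ! j = v j) (map (arr_row k A) [0..<N]))"
    unfolding pattern_count_def rows_mset_def by (simp only: mset_filter[symmetric] size_mset)
  also have "\<dots> = card {i. i < N \<and> (\<forall>j\<in>T. arr_row k A i ! j = v j)}"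
    unfolding length_filter_conv_card by (auto intro!: arg_cong[where f = card])
  also have "\<dots> = card {i. i < N \<and> (\<forall>j\<in>T. A i j = v j)}"
    using assms by (intro arg_cong[where f = card] Collect_cong conj_cong ball_cong refl)
      (auto simp: arr_row_def)
  finally show ?thesis .
qed


lemma is_OA_iff_oa_mset: "is_OA N k t A \<longleftrightarrow> oa_mset k t (rows_mset N k A)"
proof -
  have count: "(of_nat c :: rat) = of_nat N / 2 ^ t \<longleftrightarrow> 2 ^ t * c = N" for c
  proof -
    have "(of_nat c :: rat) = of_nat N / 2 ^ t \<longleftrightarrow> of_nat (2 ^ t * c) = (of_nat N :: rat)"
      by (simp add: field_simps)
    then show ?thesis by (simp only: of_nat_eq_iff)
  qed
  have "pm_array N k A \<longleftrightarrow> (\<forall>z\<in>#rows_mset N k A. pm_vec k z)"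
    by (auto simp: pm_array_iff_pm_vec_rows rows_mset_def)
  moreover have "size (rows_mset N k A) = N" by (simp add: rows_mset_def)
  ultimately show ?thesis
    unfolding is_OA_def oa_mset_def count by (simp add: pattern_count_rows_mset)
qed

lemma rows_mset_act_eq_image_mset: "rows_mset_act N k g A = image_mset g (rows_mset N k A)"
  by (simp add: rows_mset_act_def rows_mset_def image_mset.compositionality comp_def)

lemma size_filter_mset_disj:
  "(\<And>z. z \<in># M \<Longrightarrow> \<not> (P z \<and> Q z)) \<Longrightarrow>
    size {#z \<in># M. P z \<or> Q z#} = size {#z \<in># M. P z#} + size {#z \<in># M. Q z#}"
  by (induction M) auto

lemma pattern_count_split:
  assumes "x \<notin> T" and "\<forall>z\<in>#M. z ! x \<in> {-1, 1}" and "s \<in> {-1, 1}"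
  shows "pattern_count M T v
    = pattern_count M (insert x T) (v(x := s)) + pattern_count M (insert x T) (v(x := - s))"
proof -
  have "{#z \<in># M. \<forall>j\<in>T. z ! j = v j#} = {#z \<in># M.
      (\<forall>j\<in>insert x T. z ! j = (v(x := s)) j) \<or> (\<forall>j\<in>insert x T. z ! j = (v(x := - s)) j)#}"
  proof (rule filter_mset_cong)
    fix z assume "z \<in># M"
    then have "z ! x = s \<or> z ! x = - s" using assms(2,3) by auto
    then show "(\<forall>j\<in>T. z ! j = v j) \<longleftrightarrow>
      (\<forall>j\<in>insert x T. z ! j = (v(x := s)) j) \<or> (\<forall>j\<in>insert x T. z ! j = (v(x := - s)) j)"
      using assms(1) by auto
  qed (rule refl)
  moreover have "s \<noteq> - s" using assms(3) by auto
  ultimately show ?thesis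
    unfolding pattern_count_def by (simp add: size_filter_mset_disj)
qed

lemma oa_mset_pm_vec: "oa_mset k t M \<Longrightarrow> z \<in># M \<Longrightarrow> pm_vec k z"
  unfolding oa_mset_def by blast

lemma oa_mset_nth: "oa_mset k t M \<Longrightarrow> x < k \<Longrightarrow> \<forall>z\<in>#M. z ! x \<in> {-1, 1}"
  using oa_mset_pm_vec pm_vec_nth by blast

lemma oa_mset_SucD: assumes oa: "oa_mset k (Suc s) M" shows "oa_mset k s M"
  unfolding oa_mset_def
proof (intro conjI allI impI)
  show "\<forall>z\<in>#M. pm_vec k z" "s \<le> k" using oa unfolding oa_mset_def by simp_all
  fix T and v :: "nat \<Rightarrow> int" assume T: "T \<subseteq> {..<k}" "card T = s" and v: "v ` T \<subseteq> {-1, 1}"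
  have fin: "finite T" using T(1) finite_subset by blast
  have "card T < card {..<k}" using T oa unfolding oa_mset_def by simp
  then have "\<not> {..<k} \<subseteq> T" using card_mono[OF fin] leD by blast
  then obtain x where x: "x < k" "x \<notin> T" by blast
  then have card: "card (insert x T) = Suc s" using fin T by simp
  have half: "2 ^ Suc s * pattern_count M (insert x T) (v(x := r)) = size M" if "r \<in> {-1, 1}" for r
  proof (rule oa_mset_pattern_count[OF oa _ card])
    show "insert x T \<subseteq> {..<k}" using x T by auto
    show "(v(x := r)) ` insert x T \<subseteq> {-1, 1}" using v x(2) that by auto
  qed
  have "pattern_count M T v
      = pattern_count M (insert x T) (v(x := 1)) + pattern_count M (insert x T) (v(x := - 1))"
    using pattern_count_split[OF x(2) oa_mset_nth[OF oa x(1)]] by simp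
  then show "2 ^ s * pattern_count M T v = size M"
    using half[of 1] half[of "-1"] by (simp add: distrib_left)
qed

lemma oa_mset_mono: assumes "oa_mset k t M" "s \<le> t" shows "oa_mset k s M"
  using assms(2) by (induction rule: inc_induct) (use assms(1) oa_mset_SucD in auto)

definition flip_on :: "nat set \<Rightarrow> (nat \<Rightarrow> int) \<Rightarrow> nat \<Rightarrow> int" where
  "flip_on U w j = (if j \<in> U then - w j else w j)"

lemma flip_on_empty [simp]: "flip_on {} w = w"
  by (simp add: fun_eq_iff flip_on_def)

lemma pattern_count_flip_on:
  assumes oa: "oa_mset k n M" and S: "S \<subseteq> {..<k}" "card S = Suc n" and w: "w ` S \<subseteq> {-1, 1}"
    and U: "U \<subseteq> S"
  shows "if even (card U) then pattern_count M S (flip_on U w) = pattern_count M S w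
    else 2 ^ n * (pattern_count M S (flip_on U w) + pattern_count M S w) = size M"
proof -
  have "finite U" using S(2) U by (metis card.infinite finite_subset nat.distinct(1))
  then show ?thesis using U
  proof (induction U rule: finite_subset_induct)
    case empty
    show ?case by (simp add: flip_on_def)
  next
    case (insert a U)
    let ?F = "pattern_count M S"
    have a: "a < k" using insert.hyps(2) S(1) by auto
    have card_S: "card (S - {a}) = n" using S(2) insert.hyps(2) by simp
    have flip: "flip_on (insert a U) w = (flip_on U w)(a := - flip_on U w a)"
      using insert.hyps(3) by (auto simp: flip_on_def)
    have "flip_on U w ` (S - {a}) \<subseteq> {-1, 1}" using w by (auto simp: flip_on_def)
    then have "2 ^ n * pattern_count M (S - {a}) (flip_on U w) = size M"
      using oa_mset_pattern_count[OF oa _ card_S] S(1) by auto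
    moreover have "pattern_count M (S - {a}) (flip_on U w)
        = ?F ((flip_on U w)(a := flip_on U w a)) + ?F ((flip_on U w)(a := - flip_on U w a))"
    proof (rule pattern_count_split[of a "S - {a}", simplified insert_Diff[OF insert.hyps(2)]])
      show "flip_on U w a \<in> {-1, 1}" using w insert.hyps(2) by (auto simp: flip_on_def)
    qed (use oa_mset_nth[OF oa a] in auto)
    ultimately have step: "2 ^ n * (?F (flip_on U w) + ?F (flip_on (insert a U) w)) = size M"
      by (simp only: fun_upd_triv flip)
    have card: "card (insert a U) = Suc (card U)" using insert.hyps by simp
    show ?case
    proof (cases "even (card U)")
      case True
      then have "?F (flip_on U w) = ?F w" using insert.IH by simp
      then show ?thesis using step True by (simp add: card add.commute)
    next
      case False
      then have "2 ^ n * (?F (flip_on U w) + ?F w) = size M" using insert.IH by simp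
      then have "2 ^ n * (?F (flip_on U w) + ?F (flip_on (insert a U) w))
          = 2 ^ n * (?F (flip_on U w) + ?F w)" using step by simp
      then show ?thesis using False by (simp add: card)
    qed
  qed
qed

section \<open>Invariance of even strength\<close>

lemma oa_mset_image_mset:
  assumes oa: "oa_mset k n M" and pm: "\<And>z. pm_vec k z \<Longrightarrow> pm_vec k (h z)"
    and count: "\<And>T v. T \<subseteq> {..<k} \<Longrightarrow> card T = n \<Longrightarrow> v ` T \<subseteq> {-1, 1} \<Longrightarrow>
      2 ^ n * size {#z \<in># M. \<forall>j\<in>T. h z ! j = v j#} = size M"
  shows "oa_mset k n (image_mset h M)"
  using oa pm count unfolding oa_mset_def pattern_count_def by (simp add: filter_mset_image_mset)

lemma oa_mset_size_filter:
  assumes oa: "oa_mset k n M" and T: "T \<subseteq> {..<k}" "card T = n" "v ` T \<subseteq> {-1, 1}"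
    and P: "\<And>z. pm_vec k z \<Longrightarrow> P z \<longleftrightarrow> (\<forall>j\<in>T. z ! j = v j)"
  shows "2 ^ n * size {#z \<in># M. P z#} = size M"
proof -
  have "{#z \<in># M. P z#} = {#z \<in># M. \<forall>j\<in>T. z ! j = v j#}"
    using P oa_mset_pm_vec[OF oa] by (intro filter_mset_cong) auto
  then show ?thesis using oa_mset_pattern_count[OF oa T] by (simp add: pattern_count_def)
qed

lemma oa_mset_image_coord_perm:
  assumes \<pi>: "\<pi> permutes {..<k}" and oa: "oa_mset k n M"
  shows "oa_mset k n (image_mset (coord_perm k \<pi>) M)"
proof (rule oa_mset_image_mset[OF oa pm_vec_OD_gen[OF OD_gen.intros(1)[OF \<pi>]]])
  fix T and v :: "nat \<Rightarrow> int"
  assume T: "T \<subseteq> {..<k}" "card T = n" "v ` T \<subseteq> {-1, 1}"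
  show "2 ^ n * size {#z \<in># M. \<forall>j\<in>T. coord_perm k \<pi> z ! j = v j#} = size M"
  proof (rule oa_mset_size_filter[OF oa, of "\<pi> ` T" "v \<circ> inv \<pi>"])
    show "\<pi> ` T \<subseteq> {..<k}" using T(1) permutes_in_image[OF \<pi>] by auto
    show "card (\<pi> ` T) = n" using T(2) card_image[OF permutes_inj_on[OF \<pi>]] by simp
    show "(v \<circ> inv \<pi>) ` \<pi> ` T \<subseteq> {-1, 1}" using T(3) permutes_inverses(2)[OF \<pi>] by auto
    show "(\<forall>j\<in>T. coord_perm k \<pi> z ! j = v j) \<longleftrightarrow> (\<forall>j\<in>\<pi> ` T. z ! j = (v \<circ> inv \<pi>) j)" for z
    proof -
      have "\<forall>j\<in>T. coord_perm k \<pi> z ! j = z ! \<pi> j" using T(1) by (auto simp: nth_coord_perm)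
      then show ?thesis using permutes_inverses(2)[OF \<pi>] by auto
    qed
  qed
qed

lemma oa_mset_image_sign_change:
  assumes i: "i < k" and oa: "oa_mset k n M"
  shows "oa_mset k n (image_mset (sign_change i) M)"
proof (rule oa_mset_image_mset[OF oa pm_vec_OD_gen[OF OD_gen.intros(2)[OF i]]])
  fix T and v :: "nat \<Rightarrow> int"
  assume T: "T \<subseteq> {..<k}" "card T = n" "v ` T \<subseteq> {-1, 1}"
  show "2 ^ n * size {#z \<in># M. \<forall>j\<in>T. sign_change i z ! j = v j#} = size M"
  proof (rule oa_mset_size_filter[OF oa T(1,2), of "flip_on {i} v"])
    show "flip_on {i} v ` T \<subseteq> {-1, 1}" using T(3) by (auto simp: flip_on_def)
    show "(\<forall>j\<in>T. sign_change i z ! j = v j) \<longleftrightarrow> (\<forall>j\<in>T. z ! j = flip_on {i} v j)"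
      if "pm_vec k z" for z
      using that i by (auto simp: nth_sign_change flip_on_def pm_vec_def)
  qed
qed

lemma oa_mset_image_R_map:
  assumes i: "i < k" and n: "even n" and oa: "oa_mset k n M"
  shows "oa_mset k n (image_mset (R_map k i) M)"
proof (rule oa_mset_image_mset[OF oa pm_vec_OD_gen[OF OD_gen.intros(3)[OF i]]])
  fix T and v :: "nat \<Rightarrow> int"
  assume T: "T \<subseteq> {..<k}" "card T = n" and v: "v ` T \<subseteq> {-1, 1}"
  have R: "R_map k i z ! j = (if j = i then z ! i else z ! j * z ! i)" if "j \<in> T" for j z
    using T(1) that by (auto simp: nth_R_map)
  show "2 ^ n * size {#z \<in># M. \<forall>j\<in>T. R_map k i z ! j = v j#} = size M"
  proof (cases "i \<in> T")
    case True
    let ?v = "\<lambda>j. if j = i then v i else v j * v i"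
    show ?thesis
    proof (rule oa_mset_size_filter[OF oa T, of ?v])
      show "?v ` T \<subseteq> {-1, 1}"
      proof (rule image_subsetI)
        fix j assume "j \<in> T"
        then show "?v j \<in> {-1, 1}" using v True pm_mult[of "v j" "v i"] by auto
      qed
      show "(\<forall>j\<in>T. R_map k i z ! j = v j) \<longleftrightarrow> (\<forall>j\<in>T. z ! j = ?v j)" if "pm_vec k z" for z
      proof -
        have "z ! j * z ! i = v j \<longleftrightarrow> z ! j = v j * z ! i" for j
          using pm_vec_nth[OF that i] by auto
        then show ?thesis using True R by auto
      qed
    qed
  next
    case False
    define S where "S = insert i T"
    define w where "w = v(i := 1)"
    have S: "S \<subseteq> {..<k}" "card S = Suc n" and w: "w ` S \<subseteq> {-1, 1}"
      using T v i False finite_subset[OF T(1)] by (auto simp: S_def w_def)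
    have "{#z \<in># M. \<forall>j\<in>T. R_map k i z ! j = v j#}
        = {#z \<in># M. (\<forall>j\<in>S. z ! j = w j) \<or> (\<forall>j\<in>S. z ! j = flip_on S w j)#}"
    proof (rule filter_mset_cong[OF refl])
      fix z assume "z \<in># M"
      then have "z ! i = 1 \<or> z ! i = -1" using oa_mset_nth[OF oa i] by auto
      then show "(\<forall>j\<in>T. R_map k i z ! j = v j) \<longleftrightarrow>
          (\<forall>j\<in>S. z ! j = w j) \<or> (\<forall>j\<in>S. z ! j = flip_on S w j)"
        using False R by (auto simp: S_def w_def flip_on_def)
    qed
    also have "size \<dots> = pattern_count M S w + pattern_count M S (flip_on S w)"
        unfolding pattern_count_def
      by (rule size_filter_mset_disj) (auto simp: S_def w_def flip_on_def)
    finally show ?thesis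
      using pattern_count_flip_on[OF oa S w subset_refl] n S(2) by (simp add: add.commute)
  qed
qed

lemma oa_mset_image_OD_gen:
  assumes "OD_gen k h" and "even n" and "oa_mset k n M"
  shows "oa_mset k n (image_mset h M)"
  using assms(1)
  by cases (use assms(2,3) oa_mset_image_coord_perm oa_mset_image_sign_change oa_mset_image_R_map
    in auto)

lemma oa_mset_image_G_OD:
  assumes "G_OD k g" and n: "even n" and oa: "oa_mset k n M"
  shows "oa_mset k n (image_mset g M)"
  using assms(1)
proof induction
  case G_OD_id
  then show ?case using oa by simp
next
  case (G_OD_step h g)
  show ?case
    using oa_mset_image_OD_gen[OF G_OD_step.hyps(1) n G_OD_step.IH]
    by (simp only: image_mset.compositionality)
qed

lemma permutes_lessThan_if_inj_on:
  fixes f :: "nat \<Rightarrow> nat"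
  assumes "inj_on f {..<n}" and "f ` {..<n} \<subseteq> {..<n}" and "\<And>j. n \<le> j \<Longrightarrow> f j = j"
  shows "f permutes {..<n}"
proof (rule bij_imp_permutes)
  show "bij_betw f {..<n} {..<n}"
    using assms(1) endo_inj_surj[OF finite_lessThan assms(2,1)] by (simp add: bij_betw_def)
qed (use assms(3) in auto)

lemma permutes_lift_Suc:
  assumes \<pi>: "\<pi> permutes {..<k}"
  shows "(\<lambda>j. case j of 0 \<Rightarrow> 0 | Suc m \<Rightarrow> Suc (\<pi> m)) permutes {..<Suc k}"
proof (rule permutes_lessThan_if_inj_on)
  show "inj_on (\<lambda>j. case j of 0 \<Rightarrow> 0 | Suc m \<Rightarrow> Suc (\<pi> m)) {..<Suc k}"
  proof (rule inj_onI)
    fix a b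
    assume "(case a of 0 \<Rightarrow> 0 | Suc m \<Rightarrow> Suc (\<pi> m)) = (case b of 0 \<Rightarrow> 0 | Suc m \<Rightarrow> Suc (\<pi> m))"
    then show "a = b" using permutes_inj[OF \<pi>] by (cases a; cases b) (simp_all add: inj_eq)
  qed
  show "(\<lambda>j. case j of 0 \<Rightarrow> 0 | Suc m \<Rightarrow> Suc (\<pi> m)) ` {..<Suc k} \<subseteq> {..<Suc k}"
  proof (rule image_subsetI)
    fix j assume "j \<in> {..<Suc k}"
    then show "(case j of 0 \<Rightarrow> 0 | Suc m \<Rightarrow> Suc (\<pi> m)) \<in> {..<Suc k}"
      using permutes_in_image[OF \<pi>] by (cases j) simp_all
  qed
  show "(case j of 0 \<Rightarrow> 0 | Suc m \<Rightarrow> Suc (\<pi> m)) = j" if "Suc k \<le> j" for j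
    using that permutes_not_in[OF \<pi>] by (cases j) simp_all
qed

lemma permutes_unlift_Suc:
  assumes \<rho>: "\<rho> permutes {..<Suc k}" and \<rho>0: "\<rho> 0 = 0"
  shows "(\<lambda>j. \<rho> (Suc j) - 1) permutes {..<k}"
proof (rule permutes_lessThan_if_inj_on)
  have nz: "\<rho> (Suc j) \<noteq> 0" for j
    using permutes_inj[OF \<rho>] \<rho>0 by (metis inj_eq nat.distinct(1))
  show "inj_on (\<lambda>j. \<rho> (Suc j) - 1) {..<k}"
  proof (rule inj_onI)
    fix a b assume "\<rho> (Suc a) - 1 = \<rho> (Suc b) - 1"
    then have "\<rho> (Suc a) = \<rho> (Suc b)" using nz[of a] nz[of b] by simp
    then show "a = b" using permutes_inj[OF \<rho>] by (simp add: inj_eq)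
  qed
  show "(\<lambda>j. \<rho> (Suc j) - 1) ` {..<k} \<subseteq> {..<k}"
  proof (rule image_subsetI)
    fix j assume "j \<in> {..<k}"
    then show "\<rho> (Suc j) - 1 \<in> {..<k}" using permutes_in_image[OF \<rho>, of "Suc j"] by simp
  qed
  show "\<rho> (Suc j) - 1 = j" if "k \<le> j" for j
    using that permutes_not_in[OF \<rho>] by simp
qed

lemma hadamard_equiv_sym:
  assumes "hadamard_equiv N m A B" shows "hadamard_equiv N m B A"
proof -
  obtain \<sigma> \<tau> d1 d2 where \<sigma>: "\<sigma> permutes {..<N}" and \<tau>: "\<tau> permutes {..<m}"
    and d1: "\<forall>i<N. d1 i \<in> {-1, 1::int}" and d2: "\<forall>j<m. d2 j \<in> {-1, 1::int}"
    and B: "\<forall>i<N. \<forall>j<m. B i j = d1 i * d2 j * A (\<sigma> i) (\<tau> j)"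
    using assms unfolding hadamard_equiv_def by blast
  have \<sigma>': "inv \<sigma> i < N" if "i < N" for i
    using permutes_in_image[OF permutes_inv[OF \<sigma>]] that by simp
  have \<tau>': "inv \<tau> j < m" if "j < m" for j
    using permutes_in_image[OF permutes_inv[OF \<tau>]] that by simp
  show ?thesis
    unfolding hadamard_equiv_def
  proof (intro exI conjI allI impI)
    show "inv \<sigma> permutes {..<N}" "inv \<tau> permutes {..<m}" using \<sigma> \<tau> by (simp_all add: permutes_inv)
    show "d1 (inv \<sigma> i) \<in> {-1, 1}" if "i < N" for i using d1 \<sigma>'[OF that] by blast
    show "d2 (inv \<tau> j) \<in> {-1, 1}" if "j < m" for j using d2 \<tau>'[OF that] by blast
    fix i j assume i: "i < N" and j: "j < m"
    have "B (inv \<sigma> i) (inv \<tau> j) = d1 (inv \<sigma> i) * d2 (inv \<tau> j) * A i j"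
      using B \<sigma>'[OF i] \<tau>'[OF j] permutes_inverses(1)[OF \<sigma>] permutes_inverses(1)[OF \<tau>] by simp
    moreover have "d1 (inv \<sigma> i) * d1 (inv \<sigma> i) = 1" "d2 (inv \<tau> j) * d2 (inv \<tau> j) = 1"
      using d1 \<sigma>'[OF i] d2 \<tau>'[OF j] by (auto intro: pm_mult_self)
    ultimately show "A i j = d1 (inv \<sigma> i) * d2 (inv \<tau> j) * B (inv \<sigma> i) (inv \<tau> j)"
      by (simp add: algebra_simps)
  qed
qed

lemma one_col_eq_nth: "j < Suc k \<Longrightarrow> one_col A i j = (1 # arr_row k A i) ! j"
  by (cases j) (auto simp: one_col_def arr_row_def)

lemma mset_map_upt_permute:
  assumes "\<sigma> permutes {..<N}"
  shows "mset (map (\<lambda>i. f (\<sigma> i)) [0..<N]) = mset (map f [0..<N])"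
  using permutes_implies_image_mset_eq[OF assms, of "\<lambda>i. f (\<sigma> i)" f]
  by (simp add: atLeast0LessThan)

lemma mset_map_upt_eq_permutation:
  assumes "mset (map f [0..<N]) = mset (map g [0..<N])"
  obtains p where "p permutes {..<N}" and "\<And>i. i < N \<Longrightarrow> f i = g (p i)"
proof -
  obtain p where p: "p permutes {..<N}" and perm: "permute_list p (map g [0..<N]) = map f [0..<N]"
    using mset_eq_permutation[OF assms] by auto
  have "f i = g (p i)" if i: "i < N" for i
  proof -
    have "f i = permute_list p (map g [0..<N]) ! i" using perm i by simp
    also have "\<dots> = map g [0..<N] ! p i" using p i by (simp add: permute_list_nth)
    also have "\<dots> = g (p i)" using permutes_in_image[OF p, of i] i by simp
    finally show ?thesis .
  qed
  with p show ?thesis using that by blast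
qed

section \<open>From OD-equivalence to G(k)^OD\<close>

lemma G_OD_sign_map:
  assumes s: "\<forall>j<k. s j \<in> {-1, 1}"
  shows "\<exists>g. G_OD k g \<and> (\<forall>z. length z = k \<longrightarrow> g z = map (\<lambda>j. s j * z ! j) [0..<k])"
proof -
  have "\<exists>g. G_OD k g \<and>
      (\<forall>z. length z = k \<longrightarrow> g z = map (\<lambda>j. if j < n then s j * z ! j else z ! j) [0..<k])"
    if "n \<le> k" for n
    using that
  proof (induction n)
    case 0
    show ?case
    proof (intro exI conjI allI impI)
      show "G_OD k id" by (rule G_OD_id)
      show "id z = map (\<lambda>j. if j < 0 then s j * z ! j else z ! j) [0..<k]" if "length z = k" for z
        using that by (intro nth_equalityI) auto
    qed
  next
    case (Suc n)
    then obtain g where g: "G_OD k g"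
      and gz: "\<forall>z. length z = k \<longrightarrow> g z = map (\<lambda>j. if j < n then s j * z ! j else z ! j) [0..<k]"
      by auto
    have n: "n < k" using Suc.prems by simp
    then have sn: "s n = 1 \<or> s n = -1" using s by auto
    let ?g = "if s n = 1 then g else sign_change n \<circ> g"
    have "G_OD k ?g" using g n by (auto intro: G_OD_step OD_gen.intros(2))
    moreover have "?g z = map (\<lambda>j. if j < Suc n then s j * z ! j else z ! j) [0..<k]"
      if "length z = k" for z
      using gz that sn n by (intro nth_equalityI) (auto simp: nth_sign_change less_Suc_eq)
    ultimately show ?case by blast
  qed
  moreover have "map (\<lambda>j. if j < k then s j * z ! j else z ! j) [0..<k]
      = map (\<lambda>j. s j * z ! j) [0..<k]" for z :: "int list"
    by (rule map_cong) auto
  ultimately show ?thesis by (metis le_refl)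
qed

(* Row z after moving column tau (Suc j) of [1, z] to position j and dividing by the entry
   that tau moves to the front. *)
definition pivot_map :: "nat \<Rightarrow> (nat \<Rightarrow> nat) \<Rightarrow> int list \<Rightarrow> int list" where
  "pivot_map k \<tau> z = map (\<lambda>j. (1 # z) ! \<tau> 0 * (1 # z) ! \<tau> (Suc j)) [0..<k]"

lemma G_OD_pivot_map:
  assumes \<tau>: "\<tau> permutes {..<Suc k}"
  shows "\<exists>g. G_OD k g \<and> (\<forall>z. length z = k \<longrightarrow> g z = pivot_map k \<tau> z)"
proof -
  define c where "c = \<tau> 0"
  define \<pi> where "\<pi> j = (Transposition.transpose 0 c \<circ> \<tau>) (Suc j) - 1" for j
  define R where "R = (if c = 0 then id else R_map k (c - 1))"
  have c: "c < Suc k" using permutes_in_image[OF \<tau>] by (simp add: c_def)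
  have \<tau>_Suc: "\<tau> (Suc j) \<noteq> c" "j < k \<Longrightarrow> \<tau> (Suc j) < Suc k" for j
    using permutes_inj[OF \<tau>] permutes_in_image[OF \<tau>] by (auto simp: c_def inj_eq)
  have "Transposition.transpose 0 c \<circ> \<tau> permutes {..<Suc k}"
    using permutes_compose[OF \<tau> permutes_swap_id] c by simp
  then have \<pi>: "\<pi> permutes {..<k}"
    unfolding \<pi>_def by (rule permutes_unlift_Suc) (simp add: c_def)
  have "G_OD k R"
  proof (cases "c = 0")
    case False
    then have "c - 1 < k" using c by simp
    then show ?thesis using False by (simp add: R_def G_OD_if_OD_gen OD_gen.intros(3))
  qed (simp add: R_def G_OD_id)
  moreover have "G_OD k (coord_perm k \<pi>)" by (rule G_OD_if_OD_gen[OF OD_gen.intros(1)[OF \<pi>]])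
  moreover have "coord_perm k \<pi> (R z) = pivot_map k \<tau> z" for z
  proof (rule nth_equalityI)
    fix j assume "j < length (coord_perm k \<pi> (R z))"
    then have j: "j < k" by simp
    have "R z ! \<pi> j = (1 # z) ! c * (1 # z) ! \<tau> (Suc j)"
    proof (cases "c = 0")
      case True
      then show ?thesis using \<tau>_Suc[of j] by (simp add: R_def \<pi>_def nth_Cons')
    next
      case False
      have "\<pi> j < k" using permutes_in_image[OF \<pi>] j by simp
      then show ?thesis
        using False \<tau>_Suc[of j] j
        by (auto simp: R_def \<pi>_def nth_R_map nth_Cons' transpose_def)
    qed
    then show "coord_perm k \<pi> (R z) ! j = pivot_map k \<tau> z ! j"
      using j by (simp add: nth_coord_perm pivot_map_def c_def)
  qed (simp add: pivot_map_def)
  ultimately show ?thesis using G_OD_comp by (metis comp_apply)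
qed

lemma OD_equiv_imp_rows_mset_act:
  assumes pmY: "pm_array N k Y" and od: "OD_equiv N k X Y"
  shows "\<exists>g. G_OD k g \<and> rows_mset N k X = rows_mset_act N k g Y"
proof -
  obtain \<sigma> \<tau> d1 d2 where \<sigma>: "\<sigma> permutes {..<N}" and \<tau>: "\<tau> permutes {..<Suc k}"
    and d1: "\<forall>i<N. d1 i \<in> {-1, 1::int}" and d2: "\<forall>j<Suc k. d2 j \<in> {-1, 1::int}"
    and X: "\<forall>i<N. \<forall>j<Suc k. one_col X i j = d1 i * d2 j * one_col Y (\<sigma> i) (\<tau> j)"
    using hadamard_equiv_sym[OF od[unfolded OD_equiv_def]] unfolding hadamard_equiv_def by blast
  define s where "s j = d2 0 * d2 (Suc j)" for j
  have "s j \<in> {-1, 1}" if "j < k" for j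
    unfolding s_def using d2 that by (intro pm_mult) auto
  then obtain gs where gs: "G_OD k gs" "\<forall>z. length z = k \<longrightarrow> gs z = map (\<lambda>j. s j * z ! j) [0..<k]"
    using G_OD_sign_map[of k s] by blast
  obtain gp where gp: "G_OD k gp" "\<forall>z. length z = k \<longrightarrow> gp z = pivot_map k \<tau> z"
    using G_OD_pivot_map[OF \<tau>] by blast
  have row: "arr_row k X i = (gs \<circ> gp) (arr_row k Y (\<sigma> i))" if i: "i < N" for i
  proof (rule nth_equalityI)
    show "length (arr_row k X i) = length ((gs \<circ> gp) (arr_row k Y (\<sigma> i)))"
      using gs(2) gp(2) by (simp add: arr_row_def pivot_map_def)
    fix j assume "j < length (arr_row k X i)"
    then have j: "j < k" by (simp add: arr_row_def)
    let ?a = "one_col Y (\<sigma> i) (\<tau> 0)" and ?b = "one_col Y (\<sigma> i) (\<tau> (Suc j))"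
    have \<sigma>i: "\<sigma> i < N" using permutes_in_image[OF \<sigma>] i by simp
    have \<tau>0: "\<tau> 0 < Suc k" and \<tau>j: "\<tau> (Suc j) < Suc k"
      using permutes_in_image[OF \<tau>] j by simp_all
    have a: "?a \<in> {-1, 1}"
      using pmY \<sigma>i \<tau>0 by (cases "\<tau> 0") (auto simp: one_col_def pm_array_def)
    have "one_col X i 0 = d1 i * d2 0 * ?a" using X i by simp
    then have one: "d1 i * d2 0 * ?a = 1" by (simp add: one_col_def)
    have "one_col X i (Suc j) = d1 i * d2 (Suc j) * ?b" using X i j by simp
    then have "X i j = d1 i * d2 (Suc j) * ?b" by (simp add: one_col_def)
    then have "X i j = s j * (?a * ?b)"
      using pm_normalize[OF _ _ a one] d1 d2 i by (simp add: s_def)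
    moreover have "(gs \<circ> gp) (arr_row k Y (\<sigma> i)) ! j = s j * (?a * ?b)"
      using gs(2) gp(2) j one_col_eq_nth[OF \<tau>0] one_col_eq_nth[OF \<tau>j]
      by (simp add: arr_row_def pivot_map_def)
    ultimately show "arr_row k X i ! j = (gs \<circ> gp) (arr_row k Y (\<sigma> i)) ! j"
      using j by (simp add: arr_row_def)
  qed
  have "rows_mset N k X = mset (map (\<lambda>i. (gs \<circ> gp) (arr_row k Y (\<sigma> i))) [0..<N])"
    unfolding rows_mset_def using row by (intro arg_cong[where f = mset] map_cong) auto
  also have "\<dots> = rows_mset_act N k (gs \<circ> gp) Y"
    unfolding rows_mset_act_def by (rule mset_map_upt_permute[OF \<sigma>])
  finally show ?thesis using G_OD_comp[OF gs(1) gp(1)] by blast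
qed

section \<open>From G(k)^OD to OD-equivalence\<close>

definition hadamard_realizable :: "nat \<Rightarrow> (int list \<Rightarrow> int list) \<Rightarrow> bool" where
  "hadamard_realizable k g \<longleftrightarrow> (\<exists>\<tau> d e. \<tau> permutes {..<Suc k} \<and> (\<forall>j<Suc k. d j \<in> {-1::int, 1}) \<and>
     (\<forall>z. pm_vec k z \<longrightarrow> e z \<in> {-1::int, 1} \<and>
        (\<forall>j<Suc k. (1 # g z) ! j = e z * d j * (1 # z) ! \<tau> j)))"

lemma hadamard_realizableI:
  assumes "\<tau> permutes {..<Suc k}" and "\<And>j. j < Suc k \<Longrightarrow> d j \<in> {-1, 1}"
    and "\<And>z. pm_vec k z \<Longrightarrow> e z \<in> {-1, 1}"
    and "\<And>z j. pm_vec k z \<Longrightarrow> j < Suc k \<Longrightarrow> (1 # g z) ! j = e z * d j * (1 # z) ! \<tau> j"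
  shows "hadamard_realizable k g"
  unfolding hadamard_realizable_def using assms by blast

lemma hadamard_realizable_comp:
  assumes "hadamard_realizable k h" and "hadamard_realizable k g"
    and g: "\<And>z. pm_vec k z \<Longrightarrow> pm_vec k (g z)"
  shows "hadamard_realizable k (h \<circ> g)"
proof -
  obtain \<tau>h dh eh where h: "\<tau>h permutes {..<Suc k}" "\<forall>j<Suc k. dh j \<in> {-1::int, 1}"
     "\<forall>z. pm_vec k z \<longrightarrow> eh z \<in> {-1::int, 1} \<and>
        (\<forall>j<Suc k. (1 # h z) ! j = eh z * dh j * (1 # z) ! \<tau>h j)"
    using assms(1) unfolding hadamard_realizable_def by blast
  obtain \<tau>g dg eg where g': "\<tau>g permutes {..<Suc k}" "\<forall>j<Suc k. dg j \<in> {-1::int, 1}"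
     "\<forall>z. pm_vec k z \<longrightarrow> eg z \<in> {-1::int, 1} \<and>
        (\<forall>j<Suc k. (1 # g z) ! j = eg z * dg j * (1 # z) ! \<tau>g j)"
    using assms(2) unfolding hadamard_realizable_def by blast
  have \<tau>h_in: "\<tau>h j < Suc k" if "j < Suc k" for j using permutes_in_image[OF h(1)] that by simp
  show ?thesis
  proof (rule hadamard_realizableI[where \<tau> = "\<tau>g \<circ> \<tau>h" and d = "\<lambda>j. dh j * dg (\<tau>h j)"
        and e = "\<lambda>z. eh (g z) * eg z"])
    show "\<tau>g \<circ> \<tau>h permutes {..<Suc k}" by (rule permutes_compose[OF h(1) g'(1)])
    show "dh j * dg (\<tau>h j) \<in> {-1, 1}" if "j < Suc k" for j
      using h(2) g'(2) \<tau>h_in[OF that] that by (intro pm_mult) auto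
    show "eh (g z) * eg z \<in> {-1, 1}" if "pm_vec k z" for z
      using h(3) g'(3) g that by (intro pm_mult) auto
    fix z j assume z: "pm_vec k z" and j: "j < Suc k"
    have "(1 # (h \<circ> g) z) ! j = eh (g z) * dh j * (1 # g z) ! \<tau>h j"
      using h(3) g[OF z] j by simp
    also have "\<dots> = eh (g z) * dh j * (eg z * dg (\<tau>h j) * (1 # z) ! \<tau>g (\<tau>h j))"
      using g'(3) z \<tau>h_in[OF j] by simp
    finally show "(1 # (h \<circ> g) z) ! j
        = eh (g z) * eg z * (dh j * dg (\<tau>h j)) * (1 # z) ! (\<tau>g \<circ> \<tau>h) j"
      by (simp add: algebra_simps)
  qed
qed

lemma hadamard_realizable_OD_gen:
  assumes "OD_gen k h" shows "hadamard_realizable k h"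
  using assms
proof cases
  case (1 \<pi>)
  show ?thesis
  proof (rule hadamard_realizableI[OF permutes_lift_Suc[OF 1(2)],
        where d = "\<lambda>_. 1" and e = "\<lambda>_. 1"])
    show "(1 # h z) ! j = 1 * 1 * (1 # z) ! (case j of 0 \<Rightarrow> 0 | Suc m \<Rightarrow> Suc (\<pi> m))"
      if "j < Suc k" for z j
      using that by (cases j) (simp_all add: 1(1) nth_coord_perm)
  qed simp_all
next
  case (2 i)
  show ?thesis
  proof (rule hadamard_realizableI[OF permutes_id, where d = "\<lambda>j. if j = Suc i then -1 else 1"
        and e = "\<lambda>_. 1"])
    show "(1 # h z) ! j = 1 * (if j = Suc i then -1 else 1) * (1 # z) ! id j"
      if "pm_vec k z" "j < Suc k" for z j
      using that 2 by (cases j) (auto simp: nth_sign_change pm_vec_def)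
  qed simp_all
next
  case (3 i)
  show ?thesis
  proof (rule hadamard_realizableI[OF permutes_swap_id, where d = "\<lambda>_. 1" and e = "\<lambda>z. z ! i"])
    show "0 \<in> {..<Suc k}" "Suc i \<in> {..<Suc k}" using 3(2) by simp_all
    show "z ! i \<in> {-1, 1}" if "pm_vec k z" for z using pm_vec_nth[OF that 3(2)] .
    show "(1 # h z) ! j = z ! i * 1 * (1 # z) ! Transposition.transpose 0 (Suc i) j"
      if "pm_vec k z" "j < Suc k" for z j
    proof (cases j)
      case 0
      then show ?thesis using pm_vec_nth[OF that(1) 3(2)] by auto
    next
      case (Suc m)
      then show ?thesis using that(2) by (simp add: 3(1) nth_R_map transpose_def mult.commute)
    qed
  qed simp
qed

lemma hadamard_realizable_G_OD: "G_OD k g \<Longrightarrow> hadamard_realizable k g"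
proof (induction rule: G_OD.induct)
  case G_OD_id
  show ?case
    by (rule hadamard_realizableI[OF permutes_id, where d = "\<lambda>_. 1" and e = "\<lambda>_. 1"]) simp_all
next
  case (G_OD_step h g)
  then show ?case
    using hadamard_realizable_comp hadamard_realizable_OD_gen pm_vec_G_OD by blast
qed

lemma rows_mset_act_imp_OD_equiv:
  assumes pmY: "pm_array N k Y" and g: "G_OD k g"
    and rows: "rows_mset N k X = rows_mset_act N k g Y"
  shows "OD_equiv N k X Y"
proof -
  obtain p where p: "p permutes {..<N}"
    and row: "\<And>i. i < N \<Longrightarrow> arr_row k X i = g (arr_row k Y (p i))"
    using mset_map_upt_eq_permutation[OF rows[unfolded rows_mset_def rows_mset_act_def]] by blast
  obtain \<tau> d e where \<tau>: "\<tau> permutes {..<Suc k}" and d: "\<forall>j<Suc k. d j \<in> {-1::int, 1}"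
    and e: "\<forall>z. pm_vec k z \<longrightarrow> e z \<in> {-1::int, 1} \<and>
        (\<forall>j<Suc k. (1 # g z) ! j = e z * d j * (1 # z) ! \<tau> j)"
    using hadamard_realizable_G_OD[OF g] unfolding hadamard_realizable_def by blast
  have pY: "pm_vec k (arr_row k Y (p i))" if "i < N" for i
    using pmY permutes_in_image[OF p, of i] that by (simp add: pm_array_iff_pm_vec_rows)
  have "hadamard_equiv N (Suc k) (one_col Y) (one_col X)"
    unfolding hadamard_equiv_def
  proof (intro exI conjI allI impI)
    show "p permutes {..<N}" "\<tau> permutes {..<Suc k}" by (fact p, fact \<tau>)
    show "e (arr_row k Y (p i)) \<in> {-1, 1}" if "i < N" for i using e pY[OF that] by blast
    show "d j \<in> {-1, 1}" if "j < Suc k" for j using d that by blast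
    fix i j assume i: "i < N" and j: "j < Suc k"
    have "one_col X i j = (1 # g (arr_row k Y (p i))) ! j"
      using row[OF i] one_col_eq_nth[OF j] by simp
    also have "\<dots> = e (arr_row k Y (p i)) * d j * one_col Y (p i) (\<tau> j)"
      using e pY[OF i] j one_col_eq_nth[of "\<tau> j" k Y "p i"] permutes_in_image[OF \<tau>, of j] by simp
    finally show "one_col X i j = e (arr_row k Y (p i)) * d j * one_col Y (p i) (\<tau> j)" .
  qed
  then show ?thesis unfolding OD_equiv_def by (rule hadamard_equiv_sym)
qed

theorem theorem6:
  fixes N k t :: nat and X Y :: "nat \<Rightarrow> nat \<Rightarrow> int"
  assumes "is_OA N k t Y" and "t \<ge> 1" and "pm_array N k X"
  shows "(OD_equiv N k X Y \<longleftrightarrow> (\<exists>g. G_OD k g \<and> rows_mset N k X = rows_mset_act N k g Y))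
     \<and> (OD_equiv N k X Y \<longrightarrow> is_OA N k (2 * (t div 2)) X)"
proof -
  have pmY: "pm_array N k Y" using assms(1) by (simp add: is_OA_def)
  have "is_OA N k (2 * (t div 2)) X" if od: "OD_equiv N k X Y"
  proof -
    obtain g where g: "G_OD k g" and rows: "rows_mset N k X = image_mset g (rows_mset N k Y)"
      using OD_equiv_imp_rows_mset_act[OF pmY od] unfolding rows_mset_act_eq_image_mset by blast
    have "oa_mset k (2 * (t div 2)) (rows_mset N k Y)"
      using oa_mset_mono assms(1) by (simp add: is_OA_iff_oa_mset)
    moreover have "even (2 * (t div 2))" by simp
    ultimately show ?thesis
      unfolding is_OA_iff_oa_mset rows using oa_mset_image_G_OD[OF g] by blast
  qed
  then show ?thesis
    using OD_equiv_imp_rows_mset_act[OF pmY] rows_mset_act_imp_OD_equiv[OF pmY] by blast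
qed

end
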